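(* Let $(X,d^X,\mu,T)$ be an ergodic compact model flow. For every $\varepsilon,\delta>0$ there is $\delta_1>0$ such that for every $x\in X$ and every nonempty compact interval $K\subseteq\mathbb{R}$ with $\mathcal{L}^1(K)\ge1$, \[\mathrm{cov}\Big(\big(B^{d^{\mathbf{X}}_K}_{\delta_1\mathcal{L}^1(K)}(x),\ d^{\mathbf{X},\infty}_K\big),\ \delta\Big)<\exp(\varepsilon\,\mathcal{L}^1(K)).\]
   Context: Compact model flow: $(X,d^X)$ compact metric, $T:\mathbb{R}\curvearrowright X$ jointly continuous, $\mu$ a $T$-invariant Borel probability. For measurable $F\subseteq\mathbb{R}$ of finite measure, $d^{\mathbf{X}}_F(x,x')=\int_Fd^X(T^tx,T^tx')\,dt$; for compact $F$, $d^{\mathbf{X},\infty}_F(x,x')=\sup_{t\in F}d^X(T^tx,T^tx')$. $B^d_r(x)=\{y:d(x,y)<r\}$. For a (pseudo)metric space $(Z,d)$, $\mathrm{cov}((Z,d),r)=\min\{|F|:F\subseteq Z,\ \bigcup_{z\in F}B^d_r(z)=Z\}$. $\mathcal{L}^1$ is Lebesgue measure. *)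

theory Defs
  imports "HOL-Probability.Probability"
begin

text \<open>Compact model flow: a compact subset X of a metric type (metric d^X = dist),
  a jointly continuous real flow T on X, and a T-invariant Borel probability measure M on X.\<close>
definition compact_model_flow :: "'a::metric_space set \<Rightarrow> (real \<Rightarrow> 'a \<Rightarrow> 'a) \<Rightarrow> 'a measure \<Rightarrow> bool" where
  "compact_model_flow X T M \<longleftrightarrow>
     compact X \<and>
     (\<forall>t. \<forall>x\<in>X. T t x \<in> X) \<and>
     (\<forall>x\<in>X. T 0 x = x) \<and>
     (\<forall>s t. \<forall>x\<in>X. T (s + t) x = T s (T t x)) \<and>
     continuous_on (UNIV \<times> X) (\<lambda>(t, x). T t x) \<and>
     prob_space M \<and> space M = X \<and> sets M = sets (restrict_space borel X) \<and>
     (\<forall>t. T t \<in> measurable M M \<and> distr M M (T t) = M)"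

definition ergodic_flow :: "'a set \<Rightarrow> (real \<Rightarrow> 'a \<Rightarrow> 'a) \<Rightarrow> 'a measure \<Rightarrow> bool" where
  "ergodic_flow X T M \<longleftrightarrow>
     (\<forall>A\<in>sets M. (\<forall>t. T t -` A \<inter> X = A) \<longrightarrow> measure M A = 0 \<or> measure M A = 1)"

definition flow_int_dist :: "(real \<Rightarrow> 'a::metric_space \<Rightarrow> 'a) \<Rightarrow> real set \<Rightarrow> 'a \<Rightarrow> 'a \<Rightarrow> real" where
  "flow_int_dist T F x x' = (LINT t:F|lborel. dist (T t x) (T t x'))"

definition flow_sup_dist :: "(real \<Rightarrow> 'a::metric_space \<Rightarrow> 'a) \<Rightarrow> real set \<Rightarrow> 'a \<Rightarrow> 'a \<Rightarrow> real" where
  "flow_sup_dist T F x x' = (SUP t\<in>F. dist (T t x) (T t x'))"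

definition pball :: "'a set \<Rightarrow> ('a \<Rightarrow> 'a \<Rightarrow> real) \<Rightarrow> real \<Rightarrow> 'a \<Rightarrow> 'a set" where
  "pball Z d r x = {y\<in>Z. d x y < r}"

text \<open>cov((Z,d),r): minimal cardinality of a finite F \<subseteq> Z whose r-balls cover Z
  (infinity if no such finite F exists).\<close>
definition cov :: "'a set \<Rightarrow> ('a \<Rightarrow> 'a \<Rightarrow> real) \<Rightarrow> real \<Rightarrow> ereal" where
  "cov Z d r = Inf {ereal (real (card F)) | F. finite F \<and> F \<subseteq> Z \<and> (\<Union>z\<in>F. pball Z d r z) = Z}"

end

theory Submission
  imports Defs
begin

(* Let L = b - a >= 1 and cut [a,b] into n windows of equal length h,
   where h is at most a time scale tau on which every orbit moves less than delta/12.
   Fix x and a point y of the integral ball of radius delta1*L around x.  A window is "good"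
   for y if the orbit of y stays delta/3-close to that of x on the whole window; on a "bad"
   window the orbits are at least delta/6 apart throughout, so the integral distance bound
   allows only about delta1*L/(delta*h) bad windows.  The code of y records, for each bad
   window, a point of a fixed finite eta/2-net of X near the orbit of y at the start of the
   window.  Points with equal codes stay 2*delta/3-close on all of [a,b], so the number of
   codes bounds the covering number, and a weighted count of words with few non-blank letters
   gives a bound (1 + N*theta)^n / theta^m that is below exp(epsilon*L) for suitable theta and
   delta1. *)

section \<open>Uniform estimates for a compact model flow\<close>

lemma flow_uniformly_continuous:
  assumes "compact_model_flow X T M" "e > 0"
  shows "\<exists>d>0. \<forall>p\<in>{-1..1} \<times> X. \<forall>q\<in>{-1..1} \<times> X.
           dist p q < d \<longrightarrow> dist (T (fst p) (snd p)) (T (fst q) (snd q)) < e"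
proof -
  have X: "compact X" and cont: "continuous_on (UNIV \<times> X) (\<lambda>(t, x). T t x)"
    using assms(1) by (auto simp: compact_model_flow_def)
  have "uniformly_continuous_on ({-1..1} \<times> X) (\<lambda>(t, x). T t x)"
    by (intro compact_uniformly_continuous continuous_on_subset[OF cont] compact_Times X) auto
  then obtain d where "d > 0" "\<forall>p\<in>{-1..1} \<times> X. \<forall>q\<in>{-1..1} \<times> X.
      dist q p < d \<longrightarrow> dist ((\<lambda>(t, x). T t x) q) ((\<lambda>(t, x). T t x) p) < e"
    using assms(2) unfolding uniformly_continuous_on_def by metis
  thus ?thesis by (intro exI[of _ d]) (auto simp: dist_commute split: prod.splits)
qed

lemma flow_small_time:
  assumes "compact_model_flow X T M" "e > 0"
  shows "\<exists>\<tau>>0. \<tau> \<le> 1 \<and> (\<forall>z\<in>X. \<forall>u. \<bar>u\<bar> \<le> \<tau> \<longrightarrow> dist (T u z) z < e)"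
proof -
  obtain d where d: "d > 0" "\<forall>p\<in>{-1..1} \<times> X. \<forall>q\<in>{-1..1} \<times> X.
      dist p q < d \<longrightarrow> dist (T (fst p) (snd p)) (T (fst q) (snd q)) < e"
    using flow_uniformly_continuous[OF assms] by blast
  have T0: "\<forall>x\<in>X. T 0 x = x" using assms(1) by (auto simp: compact_model_flow_def)
  show ?thesis
  proof (intro exI[of _ "min (d/2) 1"] conjI ballI allI impI)
    fix z u assume z: "z \<in> X" and u: "\<bar>u\<bar> \<le> min (d/2) 1"
    have "dist (u, z) (0, z) < d" using u d(1) by (simp add: dist_Pair_Pair dist_real_def)
    hence "dist (T u z) (T 0 z) < e" using d(2) z u by force
    thus "dist (T u z) z < e" using T0 z by simp
  qed (use d in auto)
qed

lemma flow_small_space: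
  assumes "compact_model_flow X T M" "e > 0"
  shows "\<exists>\<eta>>0. \<forall>z\<in>X. \<forall>z'\<in>X. dist z z' < \<eta> \<longrightarrow> (\<forall>s\<in>{0..1}. dist (T s z) (T s z') < e)"
proof -
  obtain d where d: "d > 0" "\<forall>p\<in>{-1..1} \<times> X. \<forall>q\<in>{-1..1} \<times> X.
      dist p q < d \<longrightarrow> dist (T (fst p) (snd p)) (T (fst q) (snd q)) < e"
    using flow_uniformly_continuous[OF assms] by blast
  show ?thesis
  proof (intro exI[of _ d] conjI ballI impI)
    fix z z' s assume z: "z \<in> X" "z' \<in> X" "dist z z' < d" "s \<in> {0..1::real}"
    have "dist (s, z) (s, z') < d" using z by (simp add: dist_Pair_Pair)
    thus "dist (T s z) (T s z') < e" using d(2) z by force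
  qed (use d in auto)
qed

lemma orbit_dist_continuous:
  assumes "compact_model_flow X T M" "x \<in> X" "y \<in> X"
  shows "continuous_on S (\<lambda>t. dist (T t x) (T t y))"
proof -
  have cont: "continuous_on (UNIV \<times> X) (\<lambda>(t, x). T t x)"
    using assms(1) by (auto simp: compact_model_flow_def)
  have orbit: "continuous_on UNIV (\<lambda>t. T t z)" if "z \<in> X" for z
  proof -
    have "continuous_on UNIV ((\<lambda>(t, x). T t x) \<circ> (\<lambda>t. (t, z)))"
      by (rule continuous_on_compose)
        (auto intro!: continuous_intros continuous_on_subset[OF cont] simp: that)
    thus ?thesis by (simp add: o_def)
  qed
  show ?thesis
    using continuous_on_dist[OF orbit[OF assms(2)] orbit[OF assms(3)]] continuous_on_subset by blast
qed

lemma orbit_dist_shift: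
  assumes "compact_model_flow X T M" "x \<in> X" "y \<in> X"
    and small: "\<forall>z\<in>X. \<forall>u. \<bar>u\<bar> \<le> \<tau> \<longrightarrow> dist (T u z) z < e" and "\<bar>t - t0\<bar> \<le> \<tau>"
  shows "dist (T t0 x) (T t0 y) < dist (T t x) (T t y) + 2 * e"
proof -
  have TX: "\<forall>t. \<forall>x\<in>X. T t x \<in> X" and Tadd: "\<forall>s t. \<forall>x\<in>X. T (s + t) x = T s (T t x)"
    using assms(1) by (auto simp: compact_model_flow_def)
  have move: "dist (T t0 z) (T t z) < e" if "z \<in> X" for z
  proof -
    have "T t0 z = T (t0 - t) (T t z)" using Tadd that by (metis diff_add_cancel)
    thus ?thesis using small TX that assms(5) by auto
  qed
  have "dist (T t0 x) (T t0 y) \<le> dist (T t0 x) (T t x) + dist (T t x) (T t y) + dist (T t y) (T t0 y)"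
    by (metis add.commute add_left_mono dist_triangle order_trans)
  thus ?thesis using move[OF assms(2)] move[OF assms(3)] by (simp add: dist_commute)
qed

section \<open>Windows\<close>

definition window :: "real \<Rightarrow> real \<Rightarrow> nat \<Rightarrow> real set" where
  "window a h k = {a + real k * h .. a + real (Suc k) * h}"

lemma window_partition:
  fixes a b \<tau> :: real
  assumes "0 < \<tau>" "\<tau> \<le> 1" "1 \<le> b - a"
  obtains n h where "1 \<le> n" "0 < h" "h \<le> \<tau>" "\<tau> / 2 \<le> h" "b = a + real n * h"
    "real n \<le> 2 * (b - a) / \<tau>"
proof -
  define L where "L = b - a"
  define n where "n = nat \<lceil>L / \<tau>\<rceil>"
  have Lt: "1 \<le> L / \<tau>" using assms by (simp add: L_def field_simps)
  have lo: "L / \<tau> \<le> real n" and hi: "real n \<le> L / \<tau> + 1" unfolding n_def using Lt by linarith+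
  have n: "1 \<le> n" using lo Lt by linarith
  show ?thesis
  proof (rule that[of n "L / real n"])
    show "L / real n \<le> \<tau>" "\<tau> / 2 \<le> L / real n" "real n \<le> 2 * (b - a) / \<tau>"
      using lo hi Lt n assms by (auto simp: L_def field_simps)
  qed (use n assms in \<open>auto simp: L_def\<close>)
qed

lemma window_cover:
  fixes a b h t :: real
  assumes h: "h > 0" and b: "b = a + real n * h" and t: "t \<in> {a..b}" and n: "n \<ge> 1"
  shows "\<exists>k<n. t \<in> window a h k"
proof -
  define q where "q = (t - a) / h"
  have q0: "0 \<le> q" and qn: "q \<le> real n" using t h b by (auto simp: q_def field_simps)
  have tq: "t = a + q * h" using h by (simp add: q_def)
  show ?thesis
  proof (cases "nat \<lfloor>q\<rfloor> < n")
    case True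
    have "real (nat \<lfloor>q\<rfloor>) * h \<le> q * h" "q * h \<le> real (Suc (nat \<lfloor>q\<rfloor>)) * h"
      using q0 h by (auto intro!: mult_right_mono) linarith+
    thus ?thesis using True tq by (auto simp: window_def)
  next
    case False
    hence "q = real n" using qn q0 by linarith
    moreover have "real (n - 1) * h \<le> real n * h" using h by (intro mult_right_mono) auto
    ultimately show ?thesis using n tq by (intro exI[of _ "n - 1"]) (auto simp: window_def)
  qed
qed

lemma half_open_windows_disjoint:
  assumes "h > 0" "t \<in> {a + real k * h ..< a + real (Suc k) * h}"
    "t \<in> {a + real k' * h ..< a + real (Suc k') * h}"
  shows "k = k'"
proof (rule ccontr)
  assume "k \<noteq> k'"
  then consider "Suc k \<le> k'" | "Suc k' \<le> k" by linarith
  thus False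
  proof cases
    case 1 hence "real (Suc k) * h \<le> real k' * h" using assms(1) by (intro mult_right_mono) auto
    thus False using assms(2,3) unfolding atLeastLessThan_iff by linarith
  next
    case 2 hence "real (Suc k') * h \<le> real k * h" using assms(1) by (intro mult_right_mono) auto
    thus False using assms(2,3) unfolding atLeastLessThan_iff by linarith
  qed
qed

lemma integral_ge_on_windows:
  fixes f :: "real \<Rightarrow> real"
  assumes cont: "continuous_on {a..b} f" and nn: "\<forall>t\<in>{a..b}. 0 \<le> f t" and h: "h > 0"
    and b: "b = a + real n * h" and Bad: "Bad \<subseteq> {..<n}" and c: "0 \<le> c"
    and big: "\<forall>k\<in>Bad. \<forall>t\<in>window a h k. c \<le> f t"
  shows "real (card Bad) * c * h \<le> (LINT t:{a..b}|lborel. f t)"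
proof -
  define W where "W k = {a + real k * h ..< a + real (Suc k) * h}" for k
  define g where "g t = (\<Sum>k\<in>Bad. c * indicator (W k) t)" for t
  have finB: "finite Bad" using Bad finite_subset by blast
  have intW: "integrable lborel (indicator (W k) :: real \<Rightarrow> real)" for k
    unfolding W_def using h by (intro integrable_real_indicator) (auto simp: algebra_simps)
  have int_g: "integral\<^sup>L lborel g = real (card Bad) * c * h"
    unfolding g_def using intW h by (simp add: integral_sum W_def algebra_simps)
  have int_f: "integrable lborel (\<lambda>t. indicator {a..b} t *\<^sub>R f t)"
    by (rule borel_integrable_compact) (auto intro: cont)
  have int_g': "integrable lborel g" using intW unfolding g_def[abs_def] by simp
  have below: "g t \<le> indicator {a..b} t *\<^sub>R f t" for t
  proof (cases "\<exists>k\<in>Bad. t \<in> W k")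
    case True
    then obtain k0 where k0: "k0 \<in> Bad" "t \<in> W k0" by blast
    have "g t = (\<Sum>k\<in>{k0}. c * indicator (W k) t)"
      unfolding g_def using finB k0 half_open_windows_disjoint[OF h] unfolding W_def
      by (intro sum.mono_neutral_right) (auto simp: indicator_def)
    hence gt: "g t = c" using k0 by simp
    have "(1 + real k0) * h \<le> real n * h" using h Bad k0 by (intro mult_right_mono) auto
    moreover have "0 \<le> real k0 * h" using h by simp
    ultimately have "t \<in> {a..b}" using b k0(2) by (auto simp: W_def)
    moreover have "c \<le> f t" using big k0 by (auto simp: W_def window_def)
    ultimately show ?thesis using gt by simp
  next
    case False
    hence "g t = 0" unfolding g_def by (auto intro!: sum.neutral)
    thus ?thesis using nn by (simp add: indicator_def)
  qed
  have "integral\<^sup>L lborel g \<le> integral\<^sup>L lborel (\<lambda>t. indicator {a..b} t *\<^sub>R f t)"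
    by (rule integral_mono[OF int_g' int_f below])
  thus ?thesis by (simp add: int_g set_lebesgue_integral_def)
qed

section \<open>Counting sparse words\<close>

text \<open>Words of length n over the alphabet C plus a blank letter None, with at most m
  non-blank letters.\<close>
definition sparse_words :: "'b set \<Rightarrow> nat \<Rightarrow> real \<Rightarrow> (nat \<Rightarrow> 'b option) set" where
  "sparse_words C n m =
     {w \<in> PiE {..<n} (\<lambda>_. insert None (Some ` C)). real (card {k\<in>{..<n}. w k \<noteq> None}) \<le> m}"

lemma finite_sparse_words: "finite C \<Longrightarrow> finite (sparse_words C n m)"
  unfolding sparse_words_def
  by (rule finite_subset[of _ "PiE {..<n} (\<lambda>_. insert None (Some ` C))"]) (auto intro!: finite_PiE)

text \<open>Weighting blank letters by 1 and the others by theta, the total weight of all words is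
  (1 + card C * theta)^n, and each sparse word weighs at least theta^m.\<close>
lemma card_sparse_words:
  fixes C :: "'b set" and \<theta> m :: real
  assumes "finite C" "0 < \<theta>" "\<theta> \<le> 1"
  shows "real (card (sparse_words C n m)) \<le> (1 + real (card C) * \<theta>) ^ n / \<theta> powr m"
proof -
  define A where "A = insert None (Some ` C)"
  define wt where "wt v = (if v = None then 1 else \<theta>)" for v :: "'b option"
  define supp where "supp w = card {k\<in>{..<n}. w k \<noteq> None}" for w :: "nat \<Rightarrow> 'b option"
  have finA: "finite A" using assms(1) by (simp add: A_def)
  have letters: "(\<Sum>v\<in>A. wt v) = 1 + real (card C) * \<theta>"
    using assms(1) by (simp add: A_def wt_def sum.reindex)
  have word: "(\<Prod>k\<in>{..<n}. wt (w k)) = \<theta> ^ supp w" for w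
  proof -
    have "(\<Prod>k\<in>{..<n}. wt (w k)) = (\<Prod>k\<in>{..<n} \<inter> {k. w k \<noteq> None}. \<theta>) * (\<Prod>k\<in>{..<n} \<inter> - {k. w k \<noteq> None}. 1)"
      unfolding wt_def by (subst prod.If_cases[symmetric]) (auto intro!: prod.cong)
    thus ?thesis by (simp add: supp_def Int_def)
  qed
  have total: "(\<Sum>w\<in>PiE {..<n} (\<lambda>_. A). \<theta> ^ supp w) = (1 + real (card C) * \<theta>) ^ n"
    using prod_sum_PiE[of "{..<n}" "\<lambda>_. A" "\<lambda>_. wt"] finA by (simp add: letters word)
  have "real (card (sparse_words C n m)) = (\<Sum>w\<in>sparse_words C n m. 1)" by simp
  also have "\<dots> \<le> (\<Sum>w\<in>sparse_words C n m. \<theta> ^ supp w / \<theta> powr m)"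
  proof (rule sum_mono)
    fix w assume "w \<in> sparse_words C n m"
    hence "\<theta> powr m \<le> \<theta> powr real (supp w)"
      using assms by (intro powr_mono') (auto simp: sparse_words_def supp_def)
    thus "1 \<le> \<theta> ^ supp w / \<theta> powr m" using assms by (simp add: powr_realpow)
  qed
  also have "\<dots> \<le> (\<Sum>w\<in>PiE {..<n} (\<lambda>_. A). \<theta> ^ supp w / \<theta> powr m)"
    using finA assms by (intro sum_mono2) (auto simp: sparse_words_def A_def finite_PiE)
  also have "\<dots> = (1 + real (card C) * \<theta>) ^ n / \<theta> powr m"
    by (simp add: sum_divide_distrib[symmetric] total)
  finally show ?thesis .
qed

lemma sparse_word_bound_lt_exp:
  assumes "0 < \<theta>" "\<theta> \<le> 1/2" "real N * \<theta> \<le> \<epsilon> * \<tau> / 4" "0 < \<epsilon>" "0 < \<tau>" "0 < L"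
    and "real n \<le> 2 * L / \<tau>" and "m * - ln \<theta> \<le> \<epsilon> * L / 4"
  shows "(1 + real N * \<theta>) ^ n / \<theta> powr m < exp (\<epsilon> * L)"
proof -
  have "(1 + real N * \<theta>) ^ n \<le> exp (real N * \<theta>) ^ n"
    using assms(1) by (intro power_mono) (auto intro: add_nonneg_nonneg)
  also have "\<dots> = exp (real n * (real N * \<theta>))" by (simp add: exp_of_nat_mult)
  also have "\<dots> \<le> exp (\<epsilon> * L / 2)"
  proof -
    have "real n * (real N * \<theta>) \<le> (2 * L / \<tau>) * (\<epsilon> * \<tau> / 4)"
      using assms by (intro mult_mono) auto
    thus ?thesis using assms(5) by (simp add: field_simps)
  qed
  finally have words: "(1 + real N * \<theta>) ^ n \<le> exp (\<epsilon> * L / 2)" .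
  have "1 / \<theta> powr m = exp (m * - ln \<theta>)" using assms(1) by (simp add: powr_def exp_minus inverse_eq_divide)
  also have "\<dots> \<le> exp (\<epsilon> * L / 4)" using assms(8) by simp
  finally have weight: "1 / \<theta> powr m \<le> exp (\<epsilon> * L / 4)" .
  have "(1 + real N * \<theta>) ^ n / \<theta> powr m \<le> exp (\<epsilon> * L / 2) * exp (\<epsilon> * L / 4)"
    using mult_mono[OF words weight] by simp
  also have "\<dots> < exp (\<epsilon> * L)" using assms(4,6) by (simp add: exp_add[symmetric])
  finally show ?thesis .
qed

section \<open>Covering numbers from codings\<close>

lemma cov_le_card_code:
  assumes "finite S" "code ` Z \<subseteq> S"
    and close: "\<And>y y'. y \<in> Z \<Longrightarrow> y' \<in> Z \<Longrightarrow> code y = code y' \<Longrightarrow> d y y' < r"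
  shows "cov Z d r \<le> ereal (real (card S))"
proof -
  define rep where "rep c = (SOME y. y \<in> Z \<and> code y = c)" for c
  have rep: "rep (code y) \<in> Z \<and> code (rep (code y)) = code y" if "y \<in> Z" for y
    unfolding rep_def by (rule someI_ex) (use that in blast)
  define F where "F = rep ` code ` Z"
  have finF: "finite F" unfolding F_def using finite_subset[OF assms(2,1)] by simp
  have "(\<Union>z\<in>F. pball Z d r z) = Z"
    using rep close unfolding F_def pball_def by fastforce
  moreover have "F \<subseteq> Z" using rep by (auto simp: F_def)
  ultimately have "cov Z d r \<le> ereal (real (card F))"
    unfolding cov_def using finF by (intro Inf_lower) blast
  also have "card F \<le> card S"
    unfolding F_def using assms(1,2) by (meson card_image_le card_mono finite_subset le_trans)
  finally show ?thesis by simp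
qed

section \<open>The orbit code\<close>

definition net_point :: "'a::metric_space set \<Rightarrow> real \<Rightarrow> 'a \<Rightarrow> 'a" where
  "net_point C r z = (SOME c. c \<in> C \<and> z \<in> ball c r)"

lemma net_point:
  assumes "X \<subseteq> (\<Union>c\<in>C. ball c r)" "z \<in> X"
  shows "net_point C r z \<in> C" "dist (net_point C r z) z < r"
proof -
  have "\<exists>c. c \<in> C \<and> z \<in> ball c r" using assms by blast
  hence "net_point C r z \<in> C \<and> z \<in> ball (net_point C r z) r"
    unfolding net_point_def by (rule someI_ex)
  thus "net_point C r z \<in> C" "dist (net_point C r z) z < r" by auto
qed

definition orbit_code ::
    "(real \<Rightarrow> 'a::metric_space \<Rightarrow> 'a) \<Rightarrow> 'a set \<Rightarrow> real \<Rightarrow> real \<Rightarrow> real \<Rightarrow> real \<Rightarrow> nat \<Rightarrow> 'a \<Rightarrow> 'a \<Rightarrow> nat \<Rightarrow> 'a option" where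
  "orbit_code T C r e a h n x y = (\<lambda>k\<in>{..<n}.
     if \<forall>t\<in>window a h k. dist (T t x) (T t y) < e then None
     else Some (net_point C r (T (a + real k * h) y)))"

text \<open>Points of a small integral ball have sparse codes: on each non-shadowing window the
  orbits are e/2 apart throughout, which costs e/2 * h of the integral distance.\<close>
lemma orbit_code_sparse:
  assumes cmf: "compact_model_flow X T M" and x: "x \<in> X" and y: "y \<in> X"
    and net: "X \<subseteq> (\<Union>c\<in>C. ball c r)" and e: "e > 0"
    and small: "\<forall>z\<in>X. \<forall>u. \<bar>u\<bar> \<le> \<tau> \<longrightarrow> dist (T u z) z < e / 4"
    and h: "0 < h" "h \<le> \<tau>" and b: "b = a + real n * h"
    and near: "flow_int_dist T {a..b} x y < \<rho>"
  shows "orbit_code T C r e a h n x y \<in> sparse_words C n (2 * \<rho> / (e * h))"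
proof -
  have TX: "\<forall>t. \<forall>x\<in>X. T t x \<in> X" using cmf by (auto simp: compact_model_flow_def)
  define Bad where "Bad = {k\<in>{..<n}. \<not> (\<forall>t\<in>window a h k. dist (T t x) (T t y) < e)}"
  have far: "\<forall>k\<in>Bad. \<forall>t\<in>window a h k. e / 2 \<le> dist (T t x) (T t y)"
  proof (intro ballI)
    fix k t assume k: "k \<in> Bad" and t: "t \<in> window a h k"
    obtain t0 where t0: "t0 \<in> window a h k" "e \<le> dist (T t0 x) (T t0 y)"
      using k by (auto simp: Bad_def not_less)
    have "\<bar>t - t0\<bar> \<le> \<tau>" using t t0(1) h by (auto simp: window_def algebra_simps)
    thus "e / 2 \<le> dist (T t x) (T t y)"
      using orbit_dist_shift[OF cmf x y small] t0(2) by fastforce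
  qed
  have "real (card Bad) * (e / 2) * h \<le> (LINT t:{a..b}|lborel. dist (T t x) (T t y))"
    using e by (intro integral_ge_on_windows[OF orbit_dist_continuous[OF cmf x y] _ h(1) b _ _ far])
      (auto simp: Bad_def)
  also have "\<dots> < \<rho>" using near by (simp add: flow_int_dist_def)
  finally have "real (card Bad) \<le> 2 * \<rho> / (e * h)" using e h by (simp add: field_simps)
  moreover have "{k\<in>{..<n}. orbit_code T C r e a h n x y k \<noteq> None} = Bad"
    by (auto simp: orbit_code_def Bad_def)
  moreover have "orbit_code T C r e a h n x y \<in> PiE {..<n} (\<lambda>_. insert None (Some ` C))"
    using net_point[OF net] TX y by (auto simp: orbit_code_def)
  ultimately show ?thesis by (simp add: sparse_words_def)
qed

text \<open>Points with the same code stay 2e-close on the whole interval: on shadowing windows both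
  are e-close to x, and on the others they start 2r-close and spread by less than e in unit time.\<close>
lemma orbit_code_close:
  assumes cmf: "compact_model_flow X T M" and y: "y \<in> X" "y' \<in> X"
    and net: "X \<subseteq> (\<Union>c\<in>C. ball c r)"
    and spread: "\<forall>z\<in>X. \<forall>z'\<in>X. dist z z' < 2 * r \<longrightarrow> (\<forall>s\<in>{0..1}. dist (T s z) (T s z') < e)"
    and h: "0 < h" "h \<le> 1" and n: "1 \<le> n" and b: "b = a + real n * h"
    and same: "orbit_code T C r e a h n x y = orbit_code T C r e a h n x y'"
  shows "flow_sup_dist T {a..b} y y' \<le> 2 * e"
proof -
  have TX: "\<forall>t. \<forall>x\<in>X. T t x \<in> X" and Tadd: "\<forall>s t. \<forall>x\<in>X. T (s + t) x = T s (T t x)"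
    using cmf by (auto simp: compact_model_flow_def)
  have pointwise: "dist (T t y) (T t y') \<le> 2 * e" if t: "t \<in> {a..b}" for t
  proof -
    obtain k where k: "k < n" "t \<in> window a h k" using window_cover[OF h(1) b t n] by blast
    have ck: "orbit_code T C r e a h n x y k = orbit_code T C r e a h n x y' k" using same by simp
    show ?thesis
    proof (cases "\<forall>t\<in>window a h k. dist (T t x) (T t y) < e")
      case True
      hence "\<forall>t\<in>window a h k. dist (T t x) (T t y') < e"
        using ck k(1) by (auto simp: orbit_code_def split: if_splits)
      thus ?thesis using True k(2) dist_triangle3[of "T t y" "T t y'" "T t x"] by fastforce
    next
      case False
      define tk where "tk = a + real k * h"
      have ys: "T tk y \<in> X" "T tk y' \<in> X" using TX y by auto
      have "net_point C r (T tk y) = net_point C r (T tk y')"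
        using False ck k(1) by (auto simp: orbit_code_def tk_def split: if_splits)
      hence "dist (T tk y) (T tk y') < 2 * r"
        using net_point(2)[OF net ys(1)] net_point(2)[OF net ys(2)]
        by (metis dist_commute dist_triangle_lt add_strict_mono mult_2)
      moreover have "t - tk \<in> {0..1}" using k(2) h by (auto simp: window_def tk_def algebra_simps)
      ultimately have "dist (T (t - tk) (T tk y)) (T (t - tk) (T tk y')) < e"
        using spread ys by blast
      moreover have "T t z = T (t - tk) (T tk z)" if "z \<in> X" for z
        using Tadd that by (metis diff_add_cancel)
      ultimately have "dist (T t y) (T t y') < e" using y by simp
      thus ?thesis using zero_le_dist[of "T t y" "T t y'"] by linarith
    qed
  qed
  have "a \<le> b" using b h by simp
  thus ?thesis unfolding flow_sup_dist_def by (intro cSUP_least pointwise) auto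
qed

lemma cov_integral_ball_le:
  assumes cmf: "compact_model_flow X T M" and x: "x \<in> X" and \<delta>: "\<delta> > 0"
    and C: "finite C" "X \<subseteq> (\<Union>c\<in>C. ball c (\<eta> / 2))"
    and small: "\<forall>z\<in>X. \<forall>u. \<bar>u\<bar> \<le> \<tau> \<longrightarrow> dist (T u z) z < \<delta> / 12"
    and spread: "\<forall>z\<in>X. \<forall>z'\<in>X. dist z z' < \<eta> \<longrightarrow> (\<forall>s\<in>{0..1}. dist (T s z) (T s z') < \<delta> / 3)"
    and h: "0 < h" "h \<le> \<tau>" "\<tau> \<le> 1" and n: "1 \<le> n" and b: "b = a + real n * h"
    and \<theta>: "0 < \<theta>" "\<theta> \<le> 1"
  shows "cov (pball X (flow_int_dist T {a..b}) \<rho> x) (flow_sup_dist T {a..b}) \<delta>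
           \<le> ereal ((1 + real (card C) * \<theta>) ^ n / \<theta> powr (6 * \<rho> / (\<delta> * h)))"
proof -
  define Z where "Z = pball X (flow_int_dist T {a..b}) \<rho> x"
  define S where "S = sparse_words C n (6 * \<rho> / (\<delta> * h))"
  define code where "code = orbit_code T C (\<eta> / 2) (\<delta> / 3) a h n x"
  have "code y \<in> S" if "y \<in> Z" for y
  proof -
    have "code y \<in> sparse_words C n (2 * \<rho> / (\<delta> / 3 * h))"
      using orbit_code_sparse[OF cmf x _ C(2) _ _ h(1,2) b, of y "\<delta> / 3" \<rho>] small \<delta> that
      by (auto simp: Z_def code_def pball_def)
    thus ?thesis by (simp add: S_def)
  qed
  moreover have "flow_sup_dist T {a..b} y y' < \<delta>" if "y \<in> Z" "y' \<in> Z" "code y = code y'" for y y'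
    using orbit_code_close[OF cmf _ _ C(2) _ h(1) _ n b, of y y' "\<delta> / 3" x] that spread h \<delta>
    by (auto simp: Z_def code_def pball_def)
  ultimately have "cov Z (flow_sup_dist T {a..b}) \<delta> \<le> ereal (real (card S))"
    using finite_sparse_words[OF C(1)] by (intro cov_le_card_code) (auto simp: S_def)
  also have "\<dots> \<le> ereal ((1 + real (card C) * \<theta>) ^ n / \<theta> powr (6 * \<rho> / (\<delta> * h)))"
    using card_sparse_words[OF C(1) \<theta>] by (simp add: S_def)
  finally show ?thesis by (simp add: Z_def)
qed

theorem mainTheorem6:
  fixes X :: "'a::metric_space set" and T :: "real \<Rightarrow> 'a \<Rightarrow> 'a" and M :: "'a measure"
  assumes "compact_model_flow X T M" and "ergodic_flow X T M"
  shows "\<forall>\<epsilon>>0. \<forall>\<delta>>0. \<exists>\<delta>1>0. \<forall>x\<in>X. \<forall>a b. a \<le> b \<and> measure lborel {a..b} \<ge> 1 \<longrightarrow>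
           cov (pball X (flow_int_dist T {a..b}) (\<delta>1 * measure lborel {a..b}) x)
               (flow_sup_dist T {a..b}) \<delta>
             < ereal (exp (\<epsilon> * measure lborel {a..b}))"
proof (intro allI impI)
  fix \<epsilon> \<delta> :: real assume \<epsilon>: "\<epsilon> > 0" and \<delta>: "\<delta> > 0"
  note cmf = assms(1)
  obtain \<tau> where \<tau>: "0 < \<tau>" "\<tau> \<le> 1" "\<forall>z\<in>X. \<forall>u. \<bar>u\<bar> \<le> \<tau> \<longrightarrow> dist (T u z) z < \<delta> / 12"
    using flow_small_time[OF cmf, of "\<delta> / 12"] \<delta> by auto
  obtain \<eta> where \<eta>: "\<eta> > 0" "\<forall>z\<in>X. \<forall>z'\<in>X. dist z z' < \<eta> \<longrightarrow> (\<forall>s\<in>{0..1}. dist (T s z) (T s z') < \<delta> / 3)"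
    using flow_small_space[OF cmf, of "\<delta> / 3"] \<delta> by auto
  obtain C where C: "finite C" "X \<subseteq> (\<Union>c\<in>C. ball c (\<eta> / 2))"
    using seq_compact_imp_totally_bounded[OF compact_imp_seq_compact] cmf \<eta>(1)
    unfolding compact_model_flow_def by (metis half_gt_zero)
  define \<theta> where "\<theta> = min (1/2) (\<epsilon> * \<tau> / (4 * (real (card C) + 1)))"
  have \<theta>: "0 < \<theta>" "\<theta> \<le> 1/2" "real (card C) * \<theta> \<le> \<epsilon> * \<tau> / 4" "0 < - ln \<theta>"
    using \<epsilon> \<tau> unfolding \<theta>_def by (auto simp: min_def field_simps)
  define \<delta>1 where "\<delta>1 = \<epsilon> * \<delta> * \<tau> / (48 * - ln \<theta>)"
  show "\<exists>\<delta>1>0. \<forall>x\<in>X. \<forall>a b. a \<le> b \<and> measure lborel {a..b} \<ge> 1 \<longrightarrow>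
           cov (pball X (flow_int_dist T {a..b}) (\<delta>1 * measure lborel {a..b}) x)
               (flow_sup_dist T {a..b}) \<delta> < ereal (exp (\<epsilon> * measure lborel {a..b}))"
  proof (intro exI[of _ \<delta>1] conjI ballI allI impI)
    show "\<delta>1 > 0" using \<epsilon> \<delta> \<tau>(1) \<theta>(4) unfolding \<delta>1_def by (intro divide_pos_pos) auto
    fix x and a b :: real assume x: "x \<in> X" and "a \<le> b \<and> measure lborel {a..b} \<ge> 1"
    hence L: "measure lborel {a..b} = b - a" "1 \<le> b - a" by auto
    obtain n h where nh: "1 \<le> n" "0 < h" "h \<le> \<tau>" "\<tau> / 2 \<le> h" "b = a + real n * h"
      "real n \<le> 2 * (b - a) / \<tau>" using window_partition[OF \<tau>(1,2) L(2)] .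
    have "6 * (\<delta>1 * (b - a)) / (\<delta> * h) * - ln \<theta> = \<epsilon> * (b - a) * (\<tau> / (8 * h))"
      using \<delta> \<theta>(4) nh(2) by (simp add: \<delta>1_def field_simps)
    also have "\<dots> \<le> \<epsilon> * (b - a) * (1 / 4)"
      using \<epsilon> L nh(2,4) by (intro mult_left_mono) (auto simp: field_simps)
    finally show "cov (pball X (flow_int_dist T {a..b}) (\<delta>1 * measure lborel {a..b}) x)
        (flow_sup_dist T {a..b}) \<delta> < ereal (exp (\<epsilon> * measure lborel {a..b}))"
      using cov_integral_ball_le[OF cmf x \<delta> C \<tau>(3) \<eta>(2) nh(2,3) \<tau>(2) nh(1,5), of \<theta> "\<delta>1 * (b - a)"]
        sparse_word_bound_lt_exp[OF \<theta>(1-3) \<epsilon> \<tau>(1) _ nh(6)] \<theta> L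
      by (simp add: le_less_trans)
  qed
qed

end
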